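(* Fix a bandit $k$ and a labeling $L$, and let $H$ be one of the hypotheses RN, RA, RS. Suppose $q^k$ is entrywise nonnegative and transient and that $(q^k,r^k)$ satisfies $H$. Run the Triangularizer on bandit $k$ in accord with $L$. Then every execution of Step 2 is well defined (the current value $q(i,i)$ of the selected state $i$ satisfies $q(i,i)<1$), and after each execution of Step 2 the current data $(\bar q^k,\bar r^k)$, defined by writing the current tableau as $[(I-\bar q^k),\bar r^k]$, satisfy: $\bar q^k$ is entrywise nonnegative and transient, and $(\bar q^k,\bar r^k)$ satisfies the same hypothesis $H$.
   Context: Bandit $k$ has a finite state set $N_k$, real transition rates $q(i,j)$ ($i,j\in N_k$) forming the matrix $q^k$, and real rewards $r(i)$ forming the vector $r^k$. A square matrix is transient if its powers tend to $0$ entrywise. Hypotheses for bandit $k$: (RN) $q^k$ is substochastic, i.e. $\sum_{j\in N_k}q(i,j)\le 1$ for all $i\in N_k$; (RA) $r(i)\le 0$ for all $i\in N_k$; (RS) $r(i)\ge 0$ for all $i\in N_k$. Let $N$ be the union of the state sets of all bandits (pairwise disjoint) and $0\notin N$. A labeling is an injective map $L:N\cup\{0\}\to\{1,\dots,|N|+1\}$ with $L(0)=|N|+1$. Triangularizer for bandit $k$ in accord with $L$: start with the $|N_k|\times(|N_k|+1)$ tableau $T=[(I-q^k),r^k]$ (rows and first $|N_k|$ columns indexed by $N_k$, last column the reward column) and set $M=N_k$. At every stage write the current tableau as $[(I-q),r]$, thereby defining the current data $q(\cdot,\cdot)$, $r(\cdot)$. While $M\ne\emptyset$ do: Step 2: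 let $i\in M$ have the smallest label $L(i)$; set $\alpha=1/[1-q(i,i)]$ (current value); (a) replace row $i$ of the tableau by $\alpha$ times itself; (b) for each $j\in M\setminus\{i\}$, replace row $j$ by itself plus $q(j,i)$ (current value, before this step) times the updated row $i$. Step 3: replace $M$ by $M\setminus\{i\}$. *)

theory Defs
  imports Complex_Main
begin

text \<open>Matrices over a finite index set S are functions 'a => 'a => real
  (only entries with indices in S matter).  Powers of such a matrix:\<close>

fun mat_pow :: "'a set \<Rightarrow> ('a \<Rightarrow> 'a \<Rightarrow> real) \<Rightarrow> nat \<Rightarrow> 'a \<Rightarrow> 'a \<Rightarrow> real" where
  "mat_pow S A 0 = (\<lambda>i j. if i = j then 1 else 0)"
| "mat_pow S A (Suc n) = (\<lambda>i j. \<Sum>l\<in>S. A i l * mat_pow S A n l j)"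

definition transient :: "'a set \<Rightarrow> ('a \<Rightarrow> 'a \<Rightarrow> real) \<Rightarrow> bool" where
  "transient S A \<longleftrightarrow> (\<forall>i\<in>S. \<forall>j\<in>S. (\<lambda>n. mat_pow S A n i j) \<longlonglongrightarrow> 0)"

definition nonneg_mat :: "'a set \<Rightarrow> ('a \<Rightarrow> 'a \<Rightarrow> real) \<Rightarrow> bool" where
  "nonneg_mat S A \<longleftrightarrow> (\<forall>i\<in>S. \<forall>j\<in>S. 0 \<le> A i j)"

datatype hyp = RN | RA | RS

definition hyp_holds :: "hyp \<Rightarrow> 'a set \<Rightarrow> ('a \<Rightarrow> 'a \<Rightarrow> real) \<Rightarrow> ('a \<Rightarrow> real) \<Rightarrow> bool" where
  "hyp_holds H S q r = (case H of
      RN \<Rightarrow> (\<forall>i\<in>S. (\<Sum>j\<in>S. q i j) \<le> 1)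
    | RA \<Rightarrow> (\<forall>i\<in>S. r i \<le> 0)
    | RS \<Rightarrow> (\<forall>i\<in>S. r i \<ge> 0))"

text \<open>Labeling of N \<union> {0}: the extra state 0 is represented by None.\<close>
definition labeling :: "'a set \<Rightarrow> ('a option \<Rightarrow> nat) \<Rightarrow> bool" where
  "labeling N L \<longleftrightarrow> inj_on L (insert None (Some ` N))
     \<and> L ` (insert None (Some ` N)) \<subseteq> {1..card N + 1}
     \<and> L None = card N + 1"

text \<open>Tableau: rows indexed by states, columns by Some state (the (I-q) part)
  and None (the reward column).\<close>
type_synonym 'a tableau = "'a \<Rightarrow> 'a option \<Rightarrow> real"

definition cur_q :: "'a tableau \<Rightarrow> 'a \<Rightarrow> 'a \<Rightarrow> real" where
  "cur_q T j l = (if j = l then 1 else 0) - T j (Some l)"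

definition cur_r :: "'a tableau \<Rightarrow> 'a \<Rightarrow> real" where
  "cur_r T j = T j None"

definition init_tableau :: "('a \<Rightarrow> 'a \<Rightarrow> real) \<Rightarrow> ('a \<Rightarrow> real) \<Rightarrow> 'a tableau" where
  "init_tableau q r = (\<lambda>j c. case c of None \<Rightarrow> r j
                                   | Some l \<Rightarrow> (if j = l then 1 else 0) - q j l)"

definition select :: "('a option \<Rightarrow> nat) \<Rightarrow> 'a set \<Rightarrow> 'a" where
  "select L M = arg_min_on (\<lambda>s. L (Some s)) M"

text \<open>One execution of Step 2 followed by Step 3 (identity once M is empty).\<close>
definition tri_step :: "('a option \<Rightarrow> nat) \<Rightarrow> 'a tableau \<times> 'a set \<Rightarrow> 'a tableau \<times> 'a set" where
  "tri_step L TM = (let T = fst TM; M = snd TM in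
     if M = {} then (T, M) else
     (let i = select L M;
          \<alpha> = 1 / (1 - cur_q T i i);
          Ti = (\<lambda>c. \<alpha> * T i c);
          T' = (\<lambda>j c. if j = i then Ti c
                      else if j \<in> M then T j c + cur_q T j i * Ti c
                      else T j c)
      in (T', M - {i})))"

definition tri_run :: "('a option \<Rightarrow> nat) \<Rightarrow> 'a set \<Rightarrow> ('a \<Rightarrow> 'a \<Rightarrow> real) \<Rightarrow> ('a \<Rightarrow> real)
    \<Rightarrow> nat \<Rightarrow> 'a tableau \<times> 'a set" where
  "tri_run L Nk q r n = (tri_step L ^^ n) (init_tableau q r, Nk)"

end

theory Submission
  imports Defs
begin

text \<open>
  For a finite nonnegative matrix A, transience is equivalent to the
  existence of a strictly excessive vector: some x > 0 with A x < x componentwise.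
  One direction is a geometric bound A^n x \<le> \<theta>^n x with \<theta> < 1; for the other,
  x = \<Sum>k\<le>N A^k 1 works once the row sums of A^(N+1) are below 1.

  Step 2 of the Triangularizer (a pivot on the selected state i) changes the data
  by a rank-one update: with multipliers c j = q j i / (1 - q i i) for j \<in> M
  (and c j = 0 otherwise) the new data are
     q' j l = q j l + c j * (q i l - \<delta> i l),    r' j = r j + c j * r i.
  A strictly excessive x forces q i i < 1, so c \<ge> 0; then q' stays nonnegative,
  every row sum (\<Sum>l. q' j l * y l) decreases whenever row i satisfies
  (\<Sum>l. q i l * y l) \<le> y i, and the signs of r are preserved.  Taking y = x shows
  that x stays strictly excessive (hence q' stays transient), taking y = 1 gives
  RN, and the reward formula gives RA and RS.
\<close>

section \<open>Matrix powers and excessive vectors\<close>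

definition strictly_excessive :: "'a set \<Rightarrow> ('a \<Rightarrow> 'a \<Rightarrow> real) \<Rightarrow> ('a \<Rightarrow> real) \<Rightarrow> bool" where
  "strictly_excessive S A x \<longleftrightarrow> (\<forall>i\<in>S. 0 < x i \<and> (\<Sum>l\<in>S. A i l * x l) < x i)"

lemma mat_pow_nonneg:
  assumes "nonneg_mat S A" "i \<in> S" "j \<in> S"
  shows "0 \<le> mat_pow S A n i j"
  using assms(2,3)
proof (induction n arbitrary: i)
  case 0 then show ?case by simp
next
  case (Suc n)
  show ?case using Suc assms(1) unfolding nonneg_mat_def
    by (auto intro!: sum_nonneg mult_nonneg_nonneg)
qed

lemma mat_pow_0_apply:
  assumes "finite S" "i \<in> S"
  shows "(\<Sum>l\<in>S. mat_pow S A 0 i l * y l) = y i"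
proof -
  have "(\<Sum>l\<in>S. mat_pow S A 0 i l * y l) = (\<Sum>l\<in>S. if i = l then y l else 0)"
    by (intro sum.cong) auto
  then show ?thesis using assms by simp
qed

lemma mat_pow_Suc_apply:
  "(\<Sum>l\<in>S. mat_pow S A (Suc n) i l * y l) = (\<Sum>m\<in>S. A i m * (\<Sum>l\<in>S. mat_pow S A n m l * y l))"
proof -
  have "(\<Sum>l\<in>S. mat_pow S A (Suc n) i l * y l) = (\<Sum>l\<in>S. \<Sum>m\<in>S. A i m * (mat_pow S A n m l * y l))"
    by (simp add: sum_distrib_right mult.assoc)
  also have "\<dots> = (\<Sum>m\<in>S. \<Sum>l\<in>S. A i m * (mat_pow S A n m l * y l))" by (rule sum.swap)
  also have "\<dots> = (\<Sum>m\<in>S. A i m * (\<Sum>l\<in>S. mat_pow S A n m l * y l))" by (simp add: sum_distrib_left)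
  finally show ?thesis .
qed

lemma excessive_geometric_bound:
  assumes fin: "finite S" and nn: "nonneg_mat S A" and ex: "strictly_excessive S A x"
  obtains \<theta> where "0 \<le> \<theta>" "\<theta> < 1"
    "\<And>n i. i \<in> S \<Longrightarrow> (\<Sum>l\<in>S. mat_pow S A n i l * x l) \<le> \<theta>^n * x i"
proof -
  have xp: "\<And>i. i \<in> S \<Longrightarrow> 0 < x i" and xs: "\<And>i. i \<in> S \<Longrightarrow> (\<Sum>l\<in>S. A i l * x l) < x i"
    using ex unfolding strictly_excessive_def by auto
  define \<theta> where "\<theta> = Max (insert 0 ((\<lambda>i. (\<Sum>l\<in>S. A i l * x l) / x i) ` S))"
  have t1: "\<theta> < 1" unfolding \<theta>_def using fin xp xs by (auto simp: Max_less_iff)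
  have t0: "0 \<le> \<theta>" unfolding \<theta>_def using fin by (auto intro: Max_ge)
  have row: "(\<Sum>l\<in>S. A i l * x l) \<le> \<theta> * x i" if "i \<in> S" for i
  proof -
    have "(\<Sum>l\<in>S. A i l * x l) / x i \<le> \<theta>" unfolding \<theta>_def using fin that by (auto intro: Max_ge)
    then show ?thesis using xp that by (simp add: pos_divide_le_eq)
  qed
  have "(\<Sum>l\<in>S. mat_pow S A n i l * x l) \<le> \<theta>^n * x i" if "i \<in> S" for n i
    using that
  proof (induction n arbitrary: i)
    case 0 then show ?case using mat_pow_0_apply[OF fin] by simp
  next
    case (Suc n)
    have "(\<Sum>l\<in>S. mat_pow S A (Suc n) i l * x l) = (\<Sum>m\<in>S. A i m * (\<Sum>l\<in>S. mat_pow S A n m l * x l))"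
      by (rule mat_pow_Suc_apply)
    also have "\<dots> \<le> (\<Sum>m\<in>S. A i m * (\<theta>^n * x m))"
      using Suc nn unfolding nonneg_mat_def by (auto intro!: sum_mono mult_left_mono)
    also have "\<dots> = \<theta>^n * (\<Sum>m\<in>S. A i m * x m)" by (simp add: sum_distrib_left algebra_simps)
    also have "\<dots> \<le> \<theta>^n * (\<theta> * x i)" using row[OF Suc.prems] t0 by (simp add: mult_left_mono)
    finally show ?case by (simp add: algebra_simps)
  qed
  then show thesis using that t0 t1 by blast
qed

lemma transient_if_excessive:
  assumes fin: "finite S" and nn: "nonneg_mat S A" and ex: "strictly_excessive S A x"
  shows "transient S A"
  unfolding transient_def
proof (intro ballI)
  fix i j assume i: "i \<in> S" and j: "j \<in> S"
  obtain \<theta> where t0: "0 \<le> \<theta>" and t1: "\<theta> < 1"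
    and bound: "\<And>n i. i \<in> S \<Longrightarrow> (\<Sum>l\<in>S. mat_pow S A n i l * x l) \<le> \<theta>^n * x i"
    using excessive_geometric_bound[OF fin nn ex] by blast
  have xp: "\<And>i. i \<in> S \<Longrightarrow> 0 < x i" using ex unfolding strictly_excessive_def by auto
  have upper: "mat_pow S A n i j \<le> (x i / x j) * \<theta>^n" for n
  proof -
    have "mat_pow S A n i j * x j \<le> (\<Sum>l\<in>S. mat_pow S A n i l * x l)"
      using fin j mat_pow_nonneg[OF nn i] xp by (intro member_le_sum) (simp_all add: less_imp_le)
    also have "\<dots> \<le> \<theta>^n * x i" using bound[OF i] .
    finally have "mat_pow S A n i j \<le> \<theta>^n * x i / x j" using xp[OF j] by (simp add: pos_le_divide_eq)
    then show ?thesis by (simp add: field_simps)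
  qed
  have lim: "(\<lambda>n. (x i / x j) * \<theta>^n) \<longlonglongrightarrow> 0"
    using t0 t1 by (intro tendsto_mult_right_zero LIMSEQ_power_zero) simp
  show "(\<lambda>n. mat_pow S A n i j) \<longlonglongrightarrow> 0"
    by (rule tendsto_sandwich[OF always_eventually always_eventually tendsto_const lim])
      (use mat_pow_nonneg[OF nn i j] upper in auto)
qed

text \<open>Conversely, a transient nonnegative matrix has a strictly excessive vector,
  namely x = \<Sum>k\<le>N A^k 1 for N so large that the row sums of A^(N+1) are below 1.\<close>
lemma excessive_if_transient:
  assumes fin: "finite S" and nn: "nonneg_mat S A" and tr: "transient S A"
  obtains x where "strictly_excessive S A x"
proof -
  define R where "R k i = (\<Sum>l\<in>S. mat_pow S A k i l)" for k i
  have "\<forall>\<^sub>F n in sequentially. \<forall>i\<in>S. R n i < 1"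
  proof (rule eventually_ball_finite[OF fin], intro ballI)
    fix i assume i: "i \<in> S"
    have "(\<lambda>n. R n i) \<longlonglongrightarrow> 0" unfolding R_def
      using tr i unfolding transient_def by (intro tendsto_null_sum) auto
    then show "\<forall>\<^sub>F n in sequentially. R n i < 1" by (rule order_tendstoD) simp
  qed
  then obtain N where N: "\<And>n i. n \<ge> N \<Longrightarrow> i \<in> S \<Longrightarrow> R n i < 1"
    by (auto simp: eventually_sequentially)
  define x where "x i = (\<Sum>k\<le>N. R k i)" for i
  have R0: "R 0 i = 1" if "i \<in> S" for i unfolding R_def using fin that by simp
  have R_nonneg: "0 \<le> R k i" if "i \<in> S" for k i
    unfolding R_def using mat_pow_nonneg[OF nn that] by (auto intro: sum_nonneg)
  have R_Suc: "(\<Sum>l\<in>S. A i l * R k l) = R (Suc k) i" for i k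
    using mat_pow_Suc_apply[of S A k i "\<lambda>_. 1"] by (simp add: R_def)
  have "0 < x i \<and> (\<Sum>l\<in>S. A i l * x l) < x i" if i: "i \<in> S" for i
  proof
    have "x i = R 0 i + (\<Sum>k<N. R (Suc k) i)"
      unfolding x_def by (rule sum.atMost_shift)
    also have "\<dots> \<ge> 1" using R0[OF i] R_nonneg[OF i] by (simp add: sum_nonneg)
    finally show "0 < x i" by simp
    have "(\<Sum>l\<in>S. A i l * x l) = (\<Sum>k\<le>N. \<Sum>l\<in>S. A i l * R k l)"
      unfolding x_def by (simp add: sum_distrib_left) (rule sum.swap)
    also have "\<dots> = (\<Sum>k\<le>N. R (Suc k) i)" by (simp add: R_Suc)
    also have "\<dots> = x i - R 0 i + R (Suc N) i"
      unfolding x_def using sum.atMost_Suc_shift[of "\<lambda>k. R k i" N] sum.atMost_Suc[of "\<lambda>k. R k i" N] by simp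
    also have "\<dots> < x i" using R0[OF i] N[of "Suc N" i] i by auto
    finally show "(\<Sum>l\<in>S. A i l * x l) < x i" .
  qed
  then show thesis using that unfolding strictly_excessive_def by blast
qed

section \<open>One pivot step\<close>

definition pivot :: "'a tableau \<Rightarrow> 'a set \<Rightarrow> 'a \<Rightarrow> 'a tableau" where
  "pivot T M i = (let \<alpha> = 1 / (1 - cur_q T i i) in
     (\<lambda>j c. if j = i then \<alpha> * T i c
            else if j \<in> M then T j c + cur_q T j i * (\<alpha> * T i c) else T j c))"

definition pivot_mult :: "'a tableau \<Rightarrow> 'a set \<Rightarrow> 'a \<Rightarrow> 'a \<Rightarrow> real" where
  "pivot_mult T M i j = (if j \<in> M then cur_q T j i / (1 - cur_q T i i) else 0)"

lemma pivot_cur_q: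
  assumes "i \<in> M" and "cur_q T i i \<noteq> 1"
  shows "cur_q (pivot T M i) j l
           = cur_q T j l + pivot_mult T M i j * (cur_q T i l - (if i = l then 1 else 0))"
  using assms by (auto simp: pivot_def pivot_mult_def cur_q_def Let_def field_simps)

lemma pivot_cur_r:
  assumes "i \<in> M" and "cur_q T i i \<noteq> 1"
  shows "cur_r (pivot T M i) j = cur_r T j + pivot_mult T M i j * cur_r T i"
  using assms by (auto simp: pivot_def pivot_mult_def cur_r_def Let_def field_simps)

lemma pivot_row_apply:
  assumes fin: "finite S" and iS: "i \<in> S" and iM: "i \<in> M" and d: "cur_q T i i \<noteq> 1"
  shows "(\<Sum>l\<in>S. cur_q (pivot T M i) j l * y l)
           = (\<Sum>l\<in>S. cur_q T j l * y l)
             + pivot_mult T M i j * ((\<Sum>l\<in>S. cur_q T i l * y l) - y i)"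
proof -
  let ?c = "pivot_mult T M i j"
  have "(\<Sum>l\<in>S. cur_q (pivot T M i) j l * y l)
      = (\<Sum>l\<in>S. cur_q T j l * y l + ?c * (cur_q T i l * y l) - (if i = l then ?c * y l else 0))"
    by (intro sum.cong) (auto simp: pivot_cur_q[OF iM d] algebra_simps)
  also have "\<dots> = (\<Sum>l\<in>S. cur_q T j l * y l) + ?c * (\<Sum>l\<in>S. cur_q T i l * y l) - ?c * y i"
    using fin iS by (simp add: sum.distrib sum_subtractf sum_distrib_left)
  finally show ?thesis by (simp add: algebra_simps)
qed

lemma diag_less_one:
  assumes fin: "finite S" and nn: "nonneg_mat S A" and ex: "strictly_excessive S A x"
    and iS: "i \<in> S"
  shows "A i i < 1"
proof -
  have xi: "0 < x i" and row: "(\<Sum>l\<in>S. A i l * x l) < x i"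
    using ex iS unfolding strictly_excessive_def by auto
  have "A i i * x i \<le> (\<Sum>l\<in>S. A i l * x l)"
    using nn ex iS fin unfolding nonneg_mat_def strictly_excessive_def
    by (intro member_le_sum) (auto intro: mult_nonneg_nonneg less_imp_le)
  with row have "A i i * x i < 1 * x i" by simp
  then show ?thesis by (rule mult_right_less_imp_less) (use xi in simp)
qed

lemma pivot_mult_nonneg:
  assumes "nonneg_mat S (cur_q T)" and "i \<in> S" and "j \<in> S" and "cur_q T i i < 1"
  shows "0 \<le> pivot_mult T M i j"
  using assms unfolding nonneg_mat_def pivot_mult_def by auto

lemma pivot_nonneg:
  assumes nn: "nonneg_mat S (cur_q T)" and iM: "i \<in> M" and MS: "M \<subseteq> S" and d: "cur_q T i i < 1"
  shows "nonneg_mat S (cur_q (pivot T M i))"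
  unfolding nonneg_mat_def
proof (intro ballI)
  fix j l assume j: "j \<in> S" and l: "l \<in> S"
  have iS: "i \<in> S" using iM MS by auto
  show "0 \<le> cur_q (pivot T M i) j l"
  proof (cases "l = i")
    case True
    then show ?thesis
      using nn j iS d unfolding nonneg_mat_def
      by (simp add: pivot_cur_q[OF iM] pivot_mult_def field_simps)
  next
    case False
    then show ?thesis
      using nn j l iS d pivot_mult_nonneg[OF nn iS j d, of M] unfolding nonneg_mat_def
      by (simp add: pivot_cur_q[OF iM])
  qed
qed

lemma pivot_row_decreases:
  assumes fin: "finite S" and nn: "nonneg_mat S (cur_q T)" and iM: "i \<in> M" and MS: "M \<subseteq> S"
    and d: "cur_q T i i < 1" and jS: "j \<in> S"
    and pivot_row: "(\<Sum>l\<in>S. cur_q T i l * y l) \<le> y i"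
  shows "(\<Sum>l\<in>S. cur_q (pivot T M i) j l * y l) \<le> (\<Sum>l\<in>S. cur_q T j l * y l)"
proof -
  have iS: "i \<in> S" using iM MS by auto
  have "pivot_mult T M i j * ((\<Sum>l\<in>S. cur_q T i l * y l) - y i) \<le> 0"
    using pivot_mult_nonneg[OF nn iS jS d] pivot_row by (simp add: mult_nonneg_nonpos)
  then show ?thesis using pivot_row_apply[OF fin iS iM] d by simp
qed

lemma pivot_strictly_excessive:
  assumes fin: "finite S" and nn: "nonneg_mat S (cur_q T)" and iM: "i \<in> M" and MS: "M \<subseteq> S"
    and ex: "strictly_excessive S (cur_q T) x"
  shows "strictly_excessive S (cur_q (pivot T M i)) x"
proof -
  have d: "cur_q T i i < 1" using diag_less_one[OF fin nn ex] iM MS by auto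
  have "(\<Sum>l\<in>S. cur_q T i l * x l) \<le> x i"
    using ex iM MS unfolding strictly_excessive_def by (auto intro: less_imp_le)
  then show ?thesis
    using ex pivot_row_decreases[OF fin nn iM MS d] unfolding strictly_excessive_def
    by (meson le_less_trans)
qed

text \<open>Each of the hypotheses RN, RA, RS survives a pivot: RN because the all-ones
  vector is excessive, RA and RS because the rewards change by c j * r i with c \<ge> 0.\<close>
lemma pivot_hyp_holds:
  assumes fin: "finite S" and nn: "nonneg_mat S (cur_q T)" and iM: "i \<in> M" and MS: "M \<subseteq> S"
    and d: "cur_q T i i < 1" and hyp: "hyp_holds H S (cur_q T) (cur_r T)"
  shows "hyp_holds H S (cur_q (pivot T M i)) (cur_r (pivot T M i))"
proof -
  have iS: "i \<in> S" using iM MS by auto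
  have d': "cur_q T i i \<noteq> 1" using d by simp
  note c_nonneg = pivot_mult_nonneg[OF nn iS _ d, of _ M]
  show ?thesis
  proof (cases H)
    case RN
    then have row1: "\<And>j. j \<in> S \<Longrightarrow> (\<Sum>l\<in>S. cur_q T j l * 1) \<le> 1"
      using hyp unfolding hyp_holds_def by simp
    have "(\<Sum>l\<in>S. cur_q (pivot T M i) j l * 1) \<le> 1" if "j \<in> S" for j
      using pivot_row_decreases[OF fin nn iM MS d that row1[OF iS]] row1[OF that] by linarith
    then show ?thesis using RN unfolding hyp_holds_def by simp
  next
    case RA
    then show ?thesis using hyp iS c_nonneg unfolding hyp_holds_def
      by (auto simp: pivot_cur_r[OF iM d'] intro!: add_nonpos_nonpos mult_nonneg_nonpos)
  next
    case RS
    then show ?thesis using hyp iS c_nonneg unfolding hyp_holds_def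
      by (auto simp: pivot_cur_r[OF iM d'] intro!: add_nonneg_nonneg mult_nonneg_nonneg)
  qed
qed

text \<open>The invariant carried through the Triangularizer: nonnegative data for which x
  is strictly excessive and which satisfy the hypothesis H.\<close>
definition admissible :: "hyp \<Rightarrow> 'a set \<Rightarrow> ('a \<Rightarrow> real) \<Rightarrow> 'a tableau \<Rightarrow> bool" where
  "admissible H S x T \<longleftrightarrow> nonneg_mat S (cur_q T) \<and> strictly_excessive S (cur_q T) x
     \<and> hyp_holds H S (cur_q T) (cur_r T)"

lemma pivot_admissible:
  assumes fin: "finite S" and iM: "i \<in> M" and MS: "M \<subseteq> S" and adm: "admissible H S x T"
  shows "cur_q T i i < 1 \<and> admissible H S x (pivot T M i)"
proof -
  have nn: "nonneg_mat S (cur_q T)" and ex: "strictly_excessive S (cur_q T) x"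
    and hyp: "hyp_holds H S (cur_q T) (cur_r T)"
    using adm unfolding admissible_def by auto
  have d: "cur_q T i i < 1" using diag_less_one[OF fin nn ex] iM MS by auto
  show ?thesis
    unfolding admissible_def
    using d pivot_nonneg[OF nn iM MS d] pivot_strictly_excessive[OF fin nn iM MS ex]
      pivot_hyp_holds[OF fin nn iM MS d hyp] by blast
qed

section \<open>The run of the Triangularizer\<close>

lemma tri_step_pivot:
  "M \<noteq> {} \<Longrightarrow> tri_step L (T, M) = (pivot T M (select L M), M - {select L M})"
  by (simp add: tri_step_def pivot_def Let_def)

lemma select_in: "finite M \<Longrightarrow> M \<noteq> {} \<Longrightarrow> select L M \<in> M"
  unfolding select_def by (rule arg_min_if_finite(1))

lemma tri_run_Suc: "tri_run L Nk q r (Suc n) = tri_step L (tri_run L Nk q r n)"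
  by (simp add: tri_run_def)

lemma cur_q_init: "cur_q (init_tableau q r) = q"
  by (auto simp: fun_eq_iff cur_q_def init_tableau_def)

lemma cur_r_init: "cur_r (init_tableau q r) = r"
  by (auto simp: fun_eq_iff cur_r_def init_tableau_def)

lemma tri_run_invariant:
  assumes fin: "finite Nk" and adm0: "admissible H Nk x (init_tableau q r)"
  shows "snd (tri_run L Nk q r n) \<subseteq> Nk \<and> card (snd (tri_run L Nk q r n)) = card Nk - n
    \<and> admissible H Nk x (fst (tri_run L Nk q r n))"
proof (induction n)
  case 0 then show ?case using adm0 by (simp add: tri_run_def)
next
  case (Suc n)
  obtain T M where run: "tri_run L Nk q r n = (T, M)" by (cases "tri_run L Nk q r n")
  have MN: "M \<subseteq> Nk" and cM: "card M = card Nk - n" and adm: "admissible H Nk x T"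
    using Suc run by auto
  show ?case
  proof (cases "M = {}")
    case True
    then show ?thesis using MN cM adm by (simp add: tri_run_Suc run tri_step_def)
  next
    case False
    have finM: "finite M" using MN fin finite_subset by blast
    have iM: "select L M \<in> M" using select_in[OF finM False] .
    have "card (M - {select L M}) = card Nk - Suc n" using cM iM finM by simp
    then show ?thesis
      using pivot_admissible[OF fin iM MN adm] MN
      by (auto simp: tri_run_Suc run tri_step_pivot[OF False])
  qed
qed

theorem proposition3p1:
  fixes N Nk :: "'a set" and L :: "'a option \<Rightarrow> nat"
    and q :: "'a \<Rightarrow> 'a \<Rightarrow> real" and r :: "'a \<Rightarrow> real" and H :: hyp
  assumes "finite N" and "Nk \<subseteq> N" and "labeling N L"
    and "nonneg_mat Nk q" and "transient Nk q" and "hyp_holds H Nk q r"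
  shows "\<forall>n < card Nk.
           (let T = fst (tri_run L Nk q r n); M = snd (tri_run L Nk q r n);
                i = select L M; T' = fst (tri_run L Nk q r (Suc n))
            in cur_q T i i < 1
               \<and> nonneg_mat Nk (cur_q T') \<and> transient Nk (cur_q T')
               \<and> hyp_holds H Nk (cur_q T') (cur_r T'))"
proof (intro allI impI)
  fix n assume n: "n < card Nk"
  have fin: "finite Nk" using assms(1,2) finite_subset by blast
  obtain x where "strictly_excessive Nk q x" using excessive_if_transient[OF fin assms(4,5)] .
  then have adm0: "admissible H Nk x (init_tableau q r)"
    using assms(4,6) by (simp add: admissible_def cur_q_init cur_r_init)
  obtain T M where run: "tri_run L Nk q r n = (T, M)" by (cases "tri_run L Nk q r n")
  have MN: "M \<subseteq> Nk" and cM: "card M = card Nk - n" and adm: "admissible H Nk x T"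
    using tri_run_invariant[OF fin adm0, of L n] unfolding run by simp_all
  have "M \<noteq> {}" using cM n by auto
  then have iM: "select L M \<in> M" and
    step: "tri_run L Nk q r (Suc n) = (pivot T M (select L M), M - {select L M})"
    using select_in[OF finite_subset[OF MN fin]] by (simp_all add: tri_run_Suc run tri_step_pivot)
  define T' where "T' = pivot T M (select L M)"
  have diag: "cur_q T (select L M) (select L M) < 1" and adm': "admissible H Nk x T'"
    using pivot_admissible[OF fin iM MN adm] unfolding T'_def by simp_all
  then have "nonneg_mat Nk (cur_q T')" and "transient Nk (cur_q T')"
    and "hyp_holds H Nk (cur_q T') (cur_r T')"
    using transient_if_excessive[OF fin] unfolding admissible_def by blast+
  with diag show "let T = fst (tri_run L Nk q r n); M = snd (tri_run L Nk q r n);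
                i = select L M; T' = fst (tri_run L Nk q r (Suc n))
            in cur_q T i i < 1
               \<and> nonneg_mat Nk (cur_q T') \<and> transient Nk (cur_q T')
               \<and> hyp_holds H Nk (cur_q T') (cur_r T')"
    unfolding Let_def run step T'_def by simp
qed

end
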